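(* Let $K$ be a field, $\mathcal A$ a $K$-algebra, $\vartheta$ any one of the four types (left, right, pre-two-sided, two-sided), $M$ a $\vartheta$-Mathieu subspace of $\mathcal A$, and $a\in\mathcal A$ algebraic over $K$. Then $a\in\sqrt M$ if and only if $(a^N)_\vartheta\subseteq M$ for some integer $N\ge 0$.
   Context: All algebras are associative and unital. For a subset $S\subseteq\mathcal A$, $\sqrt S$ is the set of $a\in\mathcal A$ with $a^m\in S$ for all sufficiently large $m$. Let $M$ be a $K$-subspace of $\mathcal A$. $M$ is a left (resp. right) Mathieu subspace if whenever $a\in\mathcal A$ satisfies $a^m\in M$ for all $m\ge1$, then for every $b\in\mathcal A$ there is $N$ with $ba^m\in M$ (resp. $a^mb\in M$) for all $m\ge N$; pre-two-sided if it is both left and right; two-sided if whenever $a^m\in M$ for all $m\ge1$, for all $b,c\in\mathcal A$ there is $N$ with $ba^mc\in M$ for all $m\ge N$. For $x\in\mathcal A$: $(x)_\vartheta$ is $\mathcal Ax$ if $\vartheta$ = left, $x\mathcal A$ if $\vartheta$ = right, the two-sided ideal generated by $x$ if $\vartheta$ = two-sided, and $x\mathcal A+\mathcal Ax$ if $\vartheta$ = pre-two-sided. *)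

theory Defs
  imports Main "HOL-Computational_Algebra.Polynomial"
begin

definition K_algebra :: "('k::field \<Rightarrow> 'b::ring_1 \<Rightarrow> 'b) \<Rightarrow> bool" where
  "K_algebra scale \<longleftrightarrow> vector_space scale \<and>
     (\<forall>c x y. scale c (x * y) = scale c x * y \<and> scale c (x * y) = x * scale c y)"

definition algebraic_over :: "('k::field \<Rightarrow> 'b::ring_1 \<Rightarrow> 'b) \<Rightarrow> 'b \<Rightarrow> bool" where
  "algebraic_over scale a \<longleftrightarrow>
     (\<exists>p :: 'k poly. p \<noteq> 0 \<and> (\<Sum>i\<le>degree p. scale (coeff p i) (a ^ i)) = 0)"

definition radical :: "'b::monoid_mult set \<Rightarrow> 'b set" where
  "radical S = {a. \<exists>N. \<forall>m\<ge>N. a ^ m \<in> S}"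

datatype mtype = LeftT | RightT | PreTwoSidedT | TwoSidedT

definition mathieu :: "mtype \<Rightarrow> 'b::ring_1 set \<Rightarrow> bool" where
  "mathieu \<theta> M \<longleftrightarrow> (\<forall>a. (\<forall>m\<ge>1. a ^ m \<in> M) \<longrightarrow>
     (case \<theta> of
        LeftT \<Rightarrow> (\<forall>b. \<exists>N. \<forall>m\<ge>N. b * a ^ m \<in> M)
      | RightT \<Rightarrow> (\<forall>b. \<exists>N. \<forall>m\<ge>N. a ^ m * b \<in> M)
      | PreTwoSidedT \<Rightarrow> (\<forall>b. \<exists>N. \<forall>m\<ge>N. b * a ^ m \<in> M) \<and>
                        (\<forall>b. \<exists>N. \<forall>m\<ge>N. a ^ m * b \<in> M)
      | TwoSidedT \<Rightarrow> (\<forall>b c. \<exists>N. \<forall>m\<ge>N. b * a ^ m * c \<in> M)))"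

text \<open>The ideal (x) of the given type. The two-sided ideal generated by x in a
unital algebra is the set of finite sums of elements b x c.\<close>
definition gen_ideal :: "mtype \<Rightarrow> 'b::ring_1 \<Rightarrow> 'b set" where
  "gen_ideal \<theta> x = (case \<theta> of
       LeftT \<Rightarrow> {b * x | b. True}
     | RightT \<Rightarrow> {x * b | b. True}
     | PreTwoSidedT \<Rightarrow> {x * b + c * x | b c. True}
     | TwoSidedT \<Rightarrow> {y. \<exists>(n::nat) b c. y = (\<Sum>i<n. b i * x * c i)})"

end

theory Submission
  imports Defs
begin

text \<open>
  If \<open>(a\<^sup>N)\<^sub>\<theta> \<subseteq> M\<close>, every \<open>a\<^sup>m\<close> with \<open>m \<ge> N\<close> lies in \<open>(a\<^sup>N)\<^sub>\<theta>\<close>.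
  Conversely, let \<open>r\<close> be the lowest degree with nonzero coefficient in an annihilating
  polynomial of \<open>a\<close>; then \<open>a\<^sup>r\<close> is a \<open>K\<close>-linear combination of higher powers of \<open>a\<close>,
  so by descending induction \<open>b a\<^sup>r c \<in> M\<close> as soon as \<open>b a\<^sup>k c \<in> M\<close> for all large \<open>k\<close>.
  The latter holds for all multipliers \<open>(b, c)\<close> admitted by \<open>\<theta>\<close>: if \<open>a\<^sup>m \<in> M\<close> for
  \<open>m \<ge> N\<^sub>0\<close>, all positive powers of \<open>x = a\<^sup>t\<close>, \<open>t = N\<^sub>0 + 1\<close>, lie in \<open>M\<close>, and the
  Mathieu property of \<open>M\<close> for \<open>x\<close> and the shifted multipliers \<open>(b a\<^sup>i, c)\<close> or
  \<open>(b, a\<^sup>i c)\<close>, \<open>i < t\<close>, covers every residue class of \<open>k\<close> modulo \<open>t\<close>.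
\<close>

text \<open>The pairs \<open>(b, c)\<close> for which the \<open>\<theta>\<close>-Mathieu condition asks \<open>b a\<^sup>m c \<in> M\<close> for large \<open>m\<close>.\<close>

definition mathieu_multipliers :: "mtype \<Rightarrow> ('b::ring_1 \<times> 'b) set" where
  "mathieu_multipliers \<theta> = (case \<theta> of
       LeftT \<Rightarrow> range (\<lambda>b. (b, 1))
     | RightT \<Rightarrow> range (\<lambda>c. (1, c))
     | PreTwoSidedT \<Rightarrow> range (\<lambda>b. (b, 1)) \<union> range (\<lambda>c. (1, c))
     | TwoSidedT \<Rightarrow> UNIV)"

lemma mathieu_multipliers_extend:
  assumes "(b, c) \<in> mathieu_multipliers \<theta>"
  shows "(b * y, c) \<in> mathieu_multipliers \<theta> \<or> (b, y * c) \<in> mathieu_multipliers \<theta>"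
  using assms by (cases \<theta>) (auto simp: mathieu_multipliers_def)

lemma mathieu_eventually_mem:
  assumes "mathieu \<theta> M" and "\<forall>m\<ge>1. x ^ m \<in> M" and "(b, c) \<in> mathieu_multipliers \<theta>"
  shows "\<exists>N. \<forall>m\<ge>N. b * x ^ m * c \<in> M"
  using assms by (cases \<theta>) (auto simp: mathieu_def mathieu_multipliers_def)

lemma K_algebra_module: "K_algebra scale \<Longrightarrow> module scale"
  unfolding K_algebra_def vector_space_def module_def by blast

lemma K_algebra_mult_scale_mult:
  assumes "K_algebra scale"
  shows "b * scale k x * c = scale k (b * x * c)"
  using assms unfolding K_algebra_def by metis

lemma mult_mem_gen_ideal:
  assumes "(b, c) \<in> mathieu_multipliers \<theta>"
  shows "b * x * c \<in> gen_ideal \<theta> x"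
proof (cases \<theta>)
  case PreTwoSidedT
  then have "b * x * c = x * 0 + b * x \<or> b * x * c = x * c + 0 * x"
    using assms by (auto simp: mathieu_multipliers_def)
  then show ?thesis
    unfolding gen_ideal_def PreTwoSidedT mtype.case by blast
next
  case TwoSidedT
  have "b * x * c = (\<Sum>i<(1::nat). (\<lambda>_. b) i * x * (\<lambda>_. c) i)"
    by simp
  then show ?thesis
    unfolding gen_ideal_def TwoSidedT mtype.case by (intro CollectI exI)
qed (use assms in \<open>auto simp: gen_ideal_def mathieu_multipliers_def\<close>)

lemma gen_ideal_subset_iff:
  assumes "K_algebra scale" and "module.subspace scale M"
  shows "gen_ideal \<theta> x \<subseteq> M \<longleftrightarrow> (\<forall>(b, c) \<in> mathieu_multipliers \<theta>. b * x * c \<in> M)"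
proof
  assume "gen_ideal \<theta> x \<subseteq> M"
  then show "\<forall>(b, c) \<in> mathieu_multipliers \<theta>. b * x * c \<in> M"
    using mult_mem_gen_ideal by blast
next
  interpret module scale using K_algebra_module[OF assms(1)] .
  assume mem: "\<forall>(b, c) \<in> mathieu_multipliers \<theta>. b * x * c \<in> M"
  show "gen_ideal \<theta> x \<subseteq> M"
  proof (cases \<theta>)
    case PreTwoSidedT
    then have "x * b \<in> M" "c * x \<in> M" for b c
      using mem unfolding mathieu_multipliers_def mtype.case by force+
    then show ?thesis
      using subspace_add[OF assms(2)] by (auto simp: PreTwoSidedT gen_ideal_def)
  next
    case TwoSidedT
    then show ?thesis
      using mem by (auto simp: gen_ideal_def mathieu_multipliers_def intro: subspace_sum[OF assms(2)])
  qed (use mem in \<open>auto simp: gen_ideal_def mathieu_multipliers_def\<close>)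
qed

lemma power_mem_gen_ideal_power:
  fixes a :: "'b::ring_1"
  assumes "N \<le> m"
  shows "a ^ m \<in> gen_ideal \<theta> (a ^ N)"
proof -
  have "(1, 1) \<in> mathieu_multipliers \<theta>"
    by (cases \<theta>) (auto simp: mathieu_multipliers_def)
  then have "(a ^ (m - N), 1) \<in> mathieu_multipliers \<theta> \<or> (1, a ^ (m - N)) \<in> mathieu_multipliers \<theta>"
    using mathieu_multipliers_extend[of 1 1 \<theta> "a ^ (m - N)"] by simp
  moreover have "a ^ m = a ^ (m - N) * a ^ N * 1" "a ^ m = 1 * a ^ N * a ^ (m - N)"
    using assms by (simp_all flip: power_add)
  ultimately show ?thesis
    using mult_mem_gen_ideal by metis
qed

lemma algebraic_power_relation:
  fixes scale :: "'k::field \<Rightarrow> 'b::ring_1 \<Rightarrow> 'b"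
  assumes "K_algebra scale" and "algebraic_over scale a"
  obtains r d f where "a ^ r = (\<Sum>i\<in>{r<..d}. scale (f i) (a ^ i))"
proof -
  interpret module scale using K_algebra_module[OF assms(1)] .
  obtain p :: "'k poly" where "p \<noteq> 0" and p_root: "(\<Sum>i\<le>degree p. scale (coeff p i) (a ^ i)) = 0"
    using assms(2) unfolding algebraic_over_def by blast
  define r where "r = (LEAST i. coeff p i \<noteq> 0)"
  have coeff_r: "coeff p r \<noteq> 0"
    unfolding r_def by (rule LeastI[of _ "degree p"]) (simp add: \<open>p \<noteq> 0\<close>)
  have coeff_below_r: "coeff p i = 0" if "i < r" for i
    using that not_less_Least r_def by blast
  have "r \<le> degree p"
    using coeff_r le_degree by blast
  then have split: "{..degree p} = {..<r} \<union> {r} \<union> {r<..degree p}"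
    by auto
  have "(\<Sum>i\<le>degree p. scale (coeff p i) (a ^ i)) =
      (\<Sum>i<r. scale (coeff p i) (a ^ i)) + scale (coeff p r) (a ^ r) +
      (\<Sum>i\<in>{r<..degree p}. scale (coeff p i) (a ^ i))"
    unfolding split by (subst sum.union_disjoint; auto)+
  also have "(\<Sum>i<r. scale (coeff p i) (a ^ i)) = 0"
    by (simp add: coeff_below_r)
  finally have "scale (coeff p r) (a ^ r) = - (\<Sum>i\<in>{r<..degree p}. scale (coeff p i) (a ^ i))"
    using p_root by (simp add: eq_neg_iff_add_eq_0)
  then have "a ^ r = scale (inverse (coeff p r)) (- (\<Sum>i\<in>{r<..degree p}. scale (coeff p i) (a ^ i)))"
    using coeff_r by (metis scale_one scale_scale left_inverse)
  also have "\<dots> = (\<Sum>i\<in>{r<..degree p}. scale (- inverse (coeff p r) * coeff p i) (a ^ i))"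
    unfolding scale_minus_right scale_sum_right by (simp add: sum_negf)
  finally have "a ^ r = (\<Sum>i\<in>{r<..degree p}. scale (- inverse (coeff p r) * coeff p i) (a ^ i))" .
  then show thesis ..
qed

lemma mem_subspace_of_power_relation:
  fixes scale :: "'k::field \<Rightarrow> 'b::ring_1 \<Rightarrow> 'b"
  assumes "K_algebra scale" and "module.subspace scale M"
    and relation: "a ^ r = (\<Sum>i\<in>{r<..d}. scale (f i) (a ^ i))"
    and eventually_mem: "\<forall>k\<ge>N. b * a ^ k * c \<in> M"
  shows "b * a ^ r * c \<in> M"
proof -
  interpret module scale using K_algebra_module[OF assms(1)] .
  have shift: "b * a ^ n * c = (\<Sum>i\<in>{r<..d}. scale (f i) (b * a ^ (n - r + i) * c))"
    if "r \<le> n" for n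
  proof -
    have "b * a ^ n * c = (b * a ^ (n - r)) * a ^ r * c"
      using that by (simp add: mult.assoc flip: power_add)
    also have "\<dots> = (\<Sum>i\<in>{r<..d}. scale (f i) (b * a ^ (n - r) * a ^ i * c))"
      by (simp add: relation sum_distrib_left sum_distrib_right K_algebra_mult_scale_mult[OF assms(1)])
    finally show ?thesis
      by (simp add: mult.assoc power_add)
  qed
  have "\<forall>k\<ge>r. b * a ^ k * c \<in> M"
    using max.cobounded1[of r N]
  proof (induction rule: inc_induct)
    case base
    then show ?case
      using eventually_mem by simp
  next
    case (step n)
    have "b * a ^ n * c \<in> M"
      unfolding shift[OF \<open>r \<le> n\<close>]
    proof (rule subspace_sum[OF assms(2)])
      fix i assume "i \<in> {r<..d}"
      then have "Suc n \<le> n - r + i"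
        using step.hyps by auto
      then show "scale (f i) (b * a ^ (n - r + i) * c) \<in> M"
        using step.IH subspace_scale[OF assms(2)] by blast
    qed
    then show ?case
      using step.IH by (metis Suc_le_eq le_neq_implies_less)
  qed
  then show ?thesis
    by simp
qed

lemma eventually_of_residues:
  fixes t :: nat
  assumes "0 < t" and "\<forall>i<t. \<exists>N. \<forall>m\<ge>N. P (t * m + i)"
  shows "\<exists>N. \<forall>k\<ge>N. P k"
proof -
  have "eventually (\<lambda>m. \<forall>i\<in>{..<t}. P (t * m + i)) sequentially"
    using assms(2) by (intro eventually_ball_finite) (auto simp: eventually_sequentially)
  then obtain N where N: "\<forall>m\<ge>N. \<forall>i<t. P (t * m + i)"
    unfolding eventually_sequentially by blast
  have "P k" if "t * N \<le> k" for k
  proof -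
    have "N \<le> k div t"
      using that assms(1) by (simp add: less_eq_div_iff_mult_less_eq mult.commute)
    then have "P (t * (k div t) + k mod t)"
      using N assms(1) mod_less_divisor by blast
    then show ?thesis
      by (simp only: mult_div_mod_eq)
  qed
  then show ?thesis
    by blast
qed

lemma radical_eventually_mem:
  fixes a :: "'b::ring_1"
  assumes "mathieu \<theta> M" and "a \<in> radical M" and "(b, c) \<in> mathieu_multipliers \<theta>"
  shows "\<exists>N. \<forall>k\<ge>N. b * a ^ k * c \<in> M"
proof -
  obtain N\<^sub>0 where N\<^sub>0: "\<forall>m\<ge>N\<^sub>0. a ^ m \<in> M"
    using assms(2) unfolding radical_def by blast
  define t where "t = Suc N\<^sub>0"
  have powers_mem: "\<forall>m\<ge>1. (a ^ t) ^ m \<in> M"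
  proof (intro allI impI)
    fix m :: nat
    assume "1 \<le> m"
    then have "N\<^sub>0 \<le> t * m"
      unfolding t_def by (metis le_SucI mult.right_neutral mult_le_mono order_refl)
    then show "(a ^ t) ^ m \<in> M"
      using N\<^sub>0 by (simp flip: power_mult)
  qed
  have "\<exists>N. \<forall>m\<ge>N. b * a ^ (t * m + i) * c \<in> M" for i
    using mathieu_multipliers_extend[OF assms(3), of "a ^ i"]
  proof
    assume "(b * a ^ i, c) \<in> mathieu_multipliers \<theta>"
    then obtain N where "\<forall>m\<ge>N. b * a ^ i * (a ^ t) ^ m * c \<in> M"
      using mathieu_eventually_mem[OF assms(1) powers_mem] by blast
    moreover have "b * a ^ i * (a ^ t) ^ m * c = b * a ^ (t * m + i) * c" for m
      by (metis add.commute mult.assoc power_add power_mult)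
    ultimately show ?thesis
      by auto
  next
    assume "(b, a ^ i * c) \<in> mathieu_multipliers \<theta>"
    then obtain N where "\<forall>m\<ge>N. b * (a ^ t) ^ m * (a ^ i * c) \<in> M"
      using mathieu_eventually_mem[OF assms(1) powers_mem] by blast
    moreover have "b * (a ^ t) ^ m * (a ^ i * c) = b * a ^ (t * m + i) * c" for m
      by (simp add: mult.assoc power_add power_mult)
    ultimately show ?thesis
      by auto
  qed
  then show ?thesis
    by (intro eventually_of_residues[of t]) (simp_all add: t_def)
qed

theorem theorem3p10:
  fixes scale :: "'k::field \<Rightarrow> 'b::ring_1 \<Rightarrow> 'b"
    and \<theta> :: mtype and M :: "'b set" and a :: 'b
  assumes "K_algebra scale"
    and "module.subspace scale M"
    and "mathieu \<theta> M"
    and "algebraic_over scale a"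
  shows "a \<in> radical M \<longleftrightarrow> (\<exists>N::nat. gen_ideal \<theta> (a ^ N) \<subseteq> M)"
proof
  assume "a \<in> radical M"
  obtain r d f where relation: "a ^ r = (\<Sum>i\<in>{r<..d}. scale (f i) (a ^ i))"
    using algebraic_power_relation[OF assms(1,4)] .
  have "b * a ^ r * c \<in> M" if "(b, c) \<in> mathieu_multipliers \<theta>" for b c
    using radical_eventually_mem[OF assms(3) \<open>a \<in> radical M\<close> that]
      mem_subspace_of_power_relation[OF assms(1,2) relation] by blast
  then have "gen_ideal \<theta> (a ^ r) \<subseteq> M"
    using gen_ideal_subset_iff[OF assms(1,2)] by blast
  then show "\<exists>N. gen_ideal \<theta> (a ^ N) \<subseteq> M" ..
next
  assume "\<exists>N. gen_ideal \<theta> (a ^ N) \<subseteq> M"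
  then obtain N where "gen_ideal \<theta> (a ^ N) \<subseteq> M" ..
  then have "\<forall>m\<ge>N. a ^ m \<in> M"
    using power_mem_gen_ideal_power by blast
  then show "a \<in> radical M"
    unfolding radical_def by blast
qed

end
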